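(* Let $T>0$, $\gamma\in(0,T]$, $\mathcal{T}=[0,T]$, $\mathcal{D}$ the set of Lebesgue measurable $\delta:\mathcal{T}\to[-1,1]$ with $\int_{\mathcal{T}}|\delta(t)|\,\mathrm{d}t\le\gamma$, $\eta^+,\eta^-\in(0,1]$, and let $y(x^b,x^r,\delta,y_0,t)=y_0+\int_0^t\big(\eta^+[x^b+\delta(s)x^r]^+-\frac{1}{\eta^-}[x^b+\delta(s)x^r]^-\big)\mathrm{d}s$. Let $\bar y^+\ge 0$, $\bar y^-\ge 0$, $\bar y>0$, and $0\le y_0\le\bar y$. Then for every $x^b\in\mathbb{R}$ and $x^r\ge 0$: (i) $[x^b+\delta(t)x^r]^+\le\bar y^+$ for all $\delta\in\mathcal{D}$, $t\in\mathcal{T}$ if and only if $x^b+x^r\le\bar y^+$; (ii) $[x^b+\delta(t)x^r]^-\le\bar y^-$ for all $\delta\in\mathcal{D}$, $t\in\mathcal{T}$ if and only if $x^r-x^b\le\bar y^-$; (iii) $y(x^b,x^r,\delta,y_0,t)\le\bar y$ for all $\delta\in\mathcal{D}$, $t\in\mathcal{T}$ if and only if $y_0+\eta^+\big(\max\{\gamma x^b,Tx^b\}+\gamma x^r\big)\le\bar y$; (iv) $y(x^b,x^r,\delta,y_0,t)\ge 0$ for all $\delta\in\mathcal{D}$, $t\in\mathcal{T}$ if and only if $y_0-\frac{1}{\eta^-}\big(\gamma x^r-\min\{\gamma x^b,Tx^b\}\big)\ge 0$.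
   Context: $[a]^+=\max\{a,0\}$, $[a]^-=\max\{-a,0\}$. $x^b$ is the battery's base power, $x^r$ the reserve capacity, $[x^b+\delta(t)x^r]^\pm$ the charging/discharging power, $\bar y^\pm$ the charging/discharging power limits, $\bar y$ the storage capacity, $y_0$ the initial state-of-charge, and $y$ the state-of-charge. *)

theory Defs
  imports "HOL-Analysis.Analysis"
begin

definition pos_part :: "real \<Rightarrow> real" where
  "pos_part a = max a 0"

definition neg_part :: "real \<Rightarrow> real" where
  "neg_part a = max (- a) 0"

definition uset :: "real \<Rightarrow> real \<Rightarrow> (real \<Rightarrow> real) set" where
  "uset T \<gamma> = {\<delta>. \<delta> \<in> borel_measurable (lebesgue_on {0..T})
      \<and> (\<forall>t\<in>{0..T}. -1 \<le> \<delta> t \<and> \<delta> t \<le> 1)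
      \<and> (\<integral>t. \<bar>\<delta> t\<bar> \<partial>(lebesgue_on {0..T})) \<le> \<gamma>}"

definition soc :: "real \<Rightarrow> real \<Rightarrow> real \<Rightarrow> real \<Rightarrow> (real \<Rightarrow> real) \<Rightarrow> real \<Rightarrow> real \<Rightarrow> real" where
  "soc \<eta>p \<eta>m xb xr \<delta> y0 t = y0 + (\<integral>s. (\<eta>p * pos_part (xb + \<delta> s * xr)
      - (1 / \<eta>m) * neg_part (xb + \<delta> s * xr)) \<partial>(lebesgue_on {0..t}))"

end

theory Submission
  imports Defs
begin

text \<open>As \<open>\<delta>\<close> runs through \<open>uset T \<gamma>\<close>, the values \<open>\<delta> t\<close> fill exactly \<open>[-1, 1]\<close>, because
  every pulse \<open>c \<cdot> 1[0,\<gamma>]\<close> with \<open>|c| \<le> 1\<close> is admissible; this gives (i) and (ii).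
  For (iii), the charging rate \<open>\<eta>p [u]\<^sup>+ - [u]\<^sup>- / \<eta>m\<close> at \<open>u = xb + d xr\<close> is at most
  \<open>a + b |d|\<close> with \<open>a = \<eta>p [xb]\<^sup>+\<close> and \<open>b = \<eta>p ([xb + xr]\<^sup>+ - [xb]\<^sup>+)\<close>, so integrating over
  \<open>[0, t]\<close> with \<open>t \<le> T\<close> and \<open>\<integral> |\<delta>| \<le> \<gamma>\<close> bounds the stored energy by \<open>a T + b \<gamma>\<close>; the
  pulse \<open>1[0,\<gamma>]\<close>, read off at \<open>t = T\<close>, \<open>t = \<gamma>\<close> or \<open>t = 0\<close> according to the signs of \<open>xb\<close>
  and \<open>xb + xr\<close>, attains this bound. Finally (iv) is (iii) for the
  mirrored battery: replacing \<open>u\<close> by \<open>-u\<close> and exchanging \<open>\<eta>p\<close> with \<open>1 / \<eta>m\<close> turns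
  discharging into charging.\<close>

lemma integrable_lebesgue_on_interval_bounded:
  fixes f :: "real \<Rightarrow> real"
  assumes "f \<in> borel_measurable (lebesgue_on {a..b})" and "\<And>s. s \<in> {a..b} \<Longrightarrow> \<bar>f s\<bar> \<le> C"
  shows "integrable (lebesgue_on {a..b}) f"
proof -
  interpret finite_measure "lebesgue_on {a..b}"
    by (rule finite_measure_lebesgue_on) auto
  show ?thesis
    by (rule integrable_const_bound[where B = C]) (use assms in \<open>auto intro!: AE_I2\<close>)
qed

lemma integral_lebesgue_on_subset:
  fixes f :: "real \<Rightarrow> real"
  assumes "S \<in> sets lebesgue" "S' \<in> sets lebesgue" "S \<subseteq> S'"
  shows "integral\<^sup>L (lebesgue_on S) f = integral\<^sup>L (lebesgue_on S') (\<lambda>s. indicator S s * f s)"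
proof -
  have "integral\<^sup>L (lebesgue_on S) f = integral\<^sup>L lebesgue (\<lambda>s. indicator S s *\<^sub>R f s)"
    using assms by (simp add: integral_restrict_space)
  also have "\<dots> = integral\<^sup>L lebesgue (\<lambda>s. indicator S' s *\<^sub>R (indicator S s * f s))"
    using assms by (intro Bochner_Integration.integral_cong) (auto simp: indicator_def)
  also have "\<dots> = integral\<^sup>L (lebesgue_on S') (\<lambda>s. indicator S s * f s)"
    using assms by (simp add: integral_restrict_space)
  finally show ?thesis .
qed

lemma integral_indicator_lebesgue_on:
  assumes "S \<in> sets lebesgue" "S' \<in> sets lebesgue" "S \<subseteq> S'"
  shows "integral\<^sup>L (lebesgue_on S') (indicator S :: real \<Rightarrow> real) = measure lebesgue S"
  using assms by (simp add: measure_restrict_space Int_absorb2)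

lemma uset_integral_le:
  fixes G :: "real \<Rightarrow> real"
  assumes \<delta>: "\<delta> \<in> uset T \<gamma>" and t: "t \<in> {0..T}" and G: "continuous_on UNIV G"
    and "0 \<le> a" "0 \<le> b" and G_le: "\<And>d. d \<in> {-1..1} \<Longrightarrow> G d \<le> a + b * \<bar>d\<bar>"
  shows "(\<integral>s. G (\<delta> s) \<partial>lebesgue_on {0..t}) \<le> a * T + b * \<gamma>"
proof -
  have \<delta>_meas: "\<delta> \<in> borel_measurable (lebesgue_on {0..T})"
    and \<delta>_range: "\<And>s. s \<in> {0..T} \<Longrightarrow> \<delta> s \<in> {-1..1}"
    and \<delta>_budget: "(\<integral>s. \<bar>\<delta> s\<bar> \<partial>lebesgue_on {0..T}) \<le> \<gamma>"
    using \<delta> by (auto simp: uset_def)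
  have "bounded (G ` {-1..1})"
    using G by (intro compact_imp_bounded compact_continuous_image) (auto intro: continuous_on_subset)
  then obtain C where C: "\<forall>d\<in>{-1..1}. \<bar>G d\<bar> \<le> C"
    by (auto simp: bounded_real)
  have G_meas: "G \<in> borel_measurable borel"
    using G by (rule borel_measurable_continuous_onI)
  have sets_t: "{0..t} \<in> sets (lebesgue_on {0..T})"
    using t by (auto simp: sets_restrict_space_iff)
  have int_G: "integrable (lebesgue_on {0..T}) (\<lambda>s. indicator {0..t} s * G (\<delta> s))"
  proof (rule integrable_lebesgue_on_interval_bounded)
    show "(\<lambda>s. indicator {0..t} s * G (\<delta> s)) \<in> borel_measurable (lebesgue_on {0..T})"
      using sets_t measurable_compose[OF \<delta>_meas G_meas] by (intro borel_measurable_times) auto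
    show "\<bar>indicator {0..t} s * G (\<delta> s)\<bar> \<le> max C 0" if "s \<in> {0..T}" for s
    proof -
      have "\<bar>G (\<delta> s)\<bar> \<le> C"
        using C \<delta>_range[OF that] by blast
      then show ?thesis
        by (auto simp: indicator_def)
    qed
  qed
  have int_ind: "integrable (lebesgue_on {0..T}) (indicator {0..t} :: real \<Rightarrow> real)"
    using sets_t by (intro integrable_lebesgue_on_interval_bounded[where C = 1]) (auto simp: indicator_def)
  have int_abs: "integrable (lebesgue_on {0..T}) (\<lambda>s. \<bar>\<delta> s\<bar>)"
    using \<delta>_meas \<delta>_range by (intro integrable_lebesgue_on_interval_bounded[where C = 1]) (auto simp: abs_le_iff)
  have "(\<integral>s. G (\<delta> s) \<partial>lebesgue_on {0..t}) = (\<integral>s. indicator {0..t} s * G (\<delta> s) \<partial>lebesgue_on {0..T})"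
    using t by (intro integral_lebesgue_on_subset) auto
  also have "\<dots> \<le> (\<integral>s. a * indicator {0..t} s + b * \<bar>\<delta> s\<bar> \<partial>lebesgue_on {0..T})"
  proof (rule integral_mono[OF int_G])
    show "integrable (lebesgue_on {0..T}) (\<lambda>s. a * indicator {0..t} s + b * \<bar>\<delta> s\<bar>)"
      using int_ind int_abs by simp
    show "indicator {0..t} s * G (\<delta> s) \<le> a * indicator {0..t} s + b * \<bar>\<delta> s\<bar>"
      if "s \<in> space (lebesgue_on {0..T})" for s
      using that G_le \<delta>_range \<open>0 \<le> b\<close> by (auto simp: indicator_def)
  qed
  also have "\<dots> = a * t + b * (\<integral>s. \<bar>\<delta> s\<bar> \<partial>lebesgue_on {0..T})"
    using int_ind int_abs t integral_indicator_lebesgue_on[of "{0..t}" "{0..T}"] by simp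
  also have "\<dots> \<le> a * T + b * \<gamma>"
    using t \<delta>_budget \<open>0 \<le> a\<close> \<open>0 \<le> b\<close> by (intro add_mono mult_left_mono) auto
  finally show ?thesis .
qed

lemma pulse_in_uset:
  assumes "0 \<le> \<gamma>" "\<gamma> \<le> T" "\<bar>c\<bar> \<le> 1"
  shows "(\<lambda>s. c * indicator {0..\<gamma>} s) \<in> uset T \<gamma>"
proof -
  have "{0..\<gamma>} \<in> sets (lebesgue_on {0..T})"
    using assms by (auto simp: sets_restrict_space_iff)
  then have "(\<lambda>s. c * indicator {0..\<gamma>} s) \<in> borel_measurable (lebesgue_on {0..T})"
    by measurable
  moreover have "(\<integral>s. \<bar>c * indicator {0..\<gamma>} s\<bar> \<partial>lebesgue_on {0..T}) = \<bar>c\<bar> * \<gamma>"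
    using assms integral_indicator_lebesgue_on[of "{0..\<gamma>}" "{0..T}"]
    by (simp add: abs_mult)
  moreover have "\<bar>c\<bar> * \<gamma> \<le> \<gamma>"
    using assms by (simp add: mult_left_le_one_le)
  ultimately show ?thesis
    using assms unfolding uset_def by (auto simp: indicator_def)
qed

lemma integral_comp_pulse:
  fixes G :: "real \<Rightarrow> real"
  assumes "0 \<le> \<gamma>" "\<gamma> \<le> t"
  shows "(\<integral>s. G (c * indicator {0..\<gamma>} s) \<partial>lebesgue_on {0..t}) = G 0 * t + (G c - G 0) * \<gamma>"
proof -
  interpret finite_measure "lebesgue_on {0..t}"
    by (rule finite_measure_lebesgue_on) auto
  have int_ind: "integrable (lebesgue_on {0..t}) (indicator {0..\<gamma>} :: real \<Rightarrow> real)"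
    using assms by (intro integrable_lebesgue_on_interval_bounded[where C = 1])
      (auto simp: indicator_def sets_restrict_space_iff intro: borel_measurable_indicator)
  have "(\<integral>s. G (c * indicator {0..\<gamma>} s) \<partial>lebesgue_on {0..t})
      = (\<integral>s. G 0 + (G c - G 0) * indicator {0..\<gamma>} s \<partial>lebesgue_on {0..t})"
    by (intro Bochner_Integration.integral_cong) (auto simp: indicator_def)
  also have "\<dots> = G 0 * t + (G c - G 0) * \<gamma>"
    using assms int_ind integral_indicator_lebesgue_on[of "{0..\<gamma>}" "{0..t}"]
    by (simp add: measure_restrict_space)
  finally show ?thesis .
qed

lemma uset_pointwise_iff:
  assumes "0 \<le> \<gamma>" "\<gamma> \<le> T"
  shows "(\<forall>\<delta>\<in>uset T \<gamma>. \<forall>t\<in>{0..T}. P (\<delta> t)) \<longleftrightarrow> (\<forall>d\<in>{-1..1}. P d)"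
proof
  assume P: "\<forall>\<delta>\<in>uset T \<gamma>. \<forall>t\<in>{0..T}. P (\<delta> t)"
  show "\<forall>d\<in>{-1..1}. P d"
  proof
    fix d :: real
    assume "d \<in> {-1..1}"
    then have "(\<lambda>s. d * indicator {0..\<gamma>} s) \<in> uset T \<gamma>"
      using assms by (intro pulse_in_uset) auto
    from bspec[OF bspec[OF P this], of 0] show "P d"
      using assms by simp
  qed
qed (auto simp: uset_def)

lemma uset_ball_uminus:
  "(\<forall>\<delta>\<in>uset T \<gamma>. P (\<lambda>s. - \<delta> s)) \<longleftrightarrow> (\<forall>\<delta>\<in>uset T \<gamma>. P \<delta>)"
proof -
  have uminus_in: "(\<lambda>s. - \<delta> s) \<in> uset T \<gamma>" if "\<delta> \<in> uset T \<gamma>" for \<delta>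
    using that unfolding uset_def by auto
  show ?thesis
  proof
    assume P: "\<forall>\<delta>\<in>uset T \<gamma>. P (\<lambda>s. - \<delta> s)"
    show "\<forall>\<delta>\<in>uset T \<gamma>. P \<delta>"
    proof
      fix \<delta>
      assume "\<delta> \<in> uset T \<gamma>"
      from bspec[OF P uminus_in[OF this]] show "P \<delta>"
        by simp
    qed
  qed (auto intro: uminus_in)
qed

lemma pos_part_affine_le:
  assumes "0 \<le> xr" "\<bar>d\<bar> \<le> 1"
  shows "pos_part (xb + d * xr) \<le> pos_part xb + (pos_part (xb + xr) - pos_part xb) * \<bar>d\<bar>"
proof (cases "0 \<le> xb")
  case True
  have "d * xr \<le> \<bar>d\<bar> * xr"
    using assms by (intro mult_right_mono) auto
  with True assms show ?thesis
    by (auto simp: pos_part_def mult.commute)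
next
  case False
  show ?thesis
  proof (cases "0 < d")
    case True
    then have "xb + d * xr \<le> d * (xb + xr)"
      using False assms mult_right_mono_neg[of d 1 xb] by (simp add: algebra_simps)
    also have "\<dots> \<le> pos_part (xb + xr) * \<bar>d\<bar>"
      using True by (simp add: pos_part_def mult.commute mult_left_mono)
    finally show ?thesis
      using False by (simp add: pos_part_def)
  next
    case False
    then have "xb + d * xr \<le> 0"
      using \<open>\<not> 0 \<le> xb\<close> assms by (simp add: mult_nonpos_nonneg add_nonpos_nonpos)
    then show ?thesis
      using \<open>\<not> 0 \<le> xb\<close> by (simp add: pos_part_def)
  qed
qed

lemma pos_part_affine_le_iff:
  assumes "0 \<le> xr" "0 \<le> yp"
  shows "(\<forall>d\<in>{-1..1}. pos_part (xb + d * xr) \<le> yp) \<longleftrightarrow> xb + xr \<le> yp"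
proof
  assume "xb + xr \<le> yp"
  moreover have "d * xr \<le> xr" if "d \<le> 1" for d
    using that assms mult_right_mono[of d 1 xr] by simp
  ultimately show "\<forall>d\<in>{-1..1}. pos_part (xb + d * xr) \<le> yp"
    using assms by (fastforce simp: pos_part_def)
next
  assume "\<forall>d\<in>{-1..1}. pos_part (xb + d * xr) \<le> yp"
  then have "pos_part (xb + 1 * xr) \<le> yp"
    by (rule bspec) simp
  then show "xb + xr \<le> yp"
    by (simp add: pos_part_def)
qed

lemma neg_part_affine_le_iff:
  assumes "0 \<le> xr" "0 \<le> ym"
  shows "(\<forall>d\<in>{-1..1}. neg_part (xb + d * xr) \<le> ym) \<longleftrightarrow> xr - xb \<le> ym"
proof
  assume "xr - xb \<le> ym"
  moreover have "- xr \<le> d * xr" if "-1 \<le> d" for d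
    using that assms mult_right_mono[of "-1" d xr] by simp
  ultimately show "\<forall>d\<in>{-1..1}. neg_part (xb + d * xr) \<le> ym"
    using assms by (fastforce simp: neg_part_def)
next
  assume "\<forall>d\<in>{-1..1}. neg_part (xb + d * xr) \<le> ym"
  then have "neg_part (xb + (-1) * xr) \<le> ym"
    by (rule bspec) simp
  then show "xr - xb \<le> ym"
    by (simp add: neg_part_def)
qed

definition net_charge :: "real \<Rightarrow> real \<Rightarrow> real \<Rightarrow> real" where
  "net_charge \<eta>p \<eta>m u = \<eta>p * pos_part u - 1 / \<eta>m * neg_part u"

lemma soc_eq_integral_net_charge:
  "soc \<eta>p \<eta>m xb xr \<delta> y0 t = y0 + (\<integral>s. net_charge \<eta>p \<eta>m (xb + \<delta> s * xr) \<partial>lebesgue_on {0..t})"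
  unfolding soc_def net_charge_def ..

lemma soc_at_0: "soc \<eta>p \<eta>m xb xr \<delta> y0 0 = y0"
  by (simp add: soc_def integral_eq_zero_null_sets)

lemma net_charge_uminus: "net_charge (1 / \<eta>m) (1 / \<eta>p) (- u) = - net_charge \<eta>p \<eta>m u"
  by (simp add: net_charge_def pos_part_def neg_part_def)

lemma soc_uminus:
  "soc \<eta>p \<eta>m xb xr \<delta> y0 t = y0 - soc (1 / \<eta>m) (1 / \<eta>p) (- xb) xr (\<lambda>s. - \<delta> s) 0 t"
  using net_charge_uminus[of \<eta>m \<eta>p "xb + _ * xr"]
  by (simp add: soc_eq_integral_net_charge)

lemma continuous_on_net_charge: "continuous_on UNIV (\<lambda>d. net_charge \<eta>p \<eta>m (xb + d * xr))"
  unfolding net_charge_def pos_part_def neg_part_def by (intro continuous_intros)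

lemma soc_le_worst_case:
  assumes "0 \<le> \<eta>p" "0 \<le> \<eta>m" "0 \<le> xr" "0 \<le> \<gamma>" "\<gamma> \<le> T"
    and "\<delta> \<in> uset T \<gamma>" "t \<in> {0..T}"
  shows "soc \<eta>p \<eta>m xb xr \<delta> y0 t \<le> y0 + max 0 (\<eta>p * (max (\<gamma> * xb) (T * xb) + \<gamma> * xr))"
proof -
  define a where "a = \<eta>p * pos_part xb"
  define b where "b = \<eta>p * (pos_part (xb + xr) - pos_part xb)"
  have "0 \<le> a" "0 \<le> b"
    using assms by (auto simp: a_def b_def pos_part_def)
  have "net_charge \<eta>p \<eta>m (xb + d * xr) \<le> a + b * \<bar>d\<bar>" if "d \<in> {-1..1}" for d
  proof -
    have "net_charge \<eta>p \<eta>m (xb + d * xr) \<le> \<eta>p * pos_part (xb + d * xr)"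
      using assms by (simp add: net_charge_def neg_part_def)
    also have "\<dots> \<le> \<eta>p * (pos_part xb + (pos_part (xb + xr) - pos_part xb) * \<bar>d\<bar>)"
      using that assms pos_part_affine_le[of xr d xb] by (intro mult_left_mono) auto
    finally show ?thesis
      by (simp add: a_def b_def algebra_simps)
  qed
  then have "soc \<eta>p \<eta>m xb xr \<delta> y0 t \<le> y0 + (a * T + b * \<gamma>)"
    using uset_integral_le[OF assms(6,7) continuous_on_net_charge \<open>0 \<le> a\<close> \<open>0 \<le> b\<close>]
    by (simp add: soc_eq_integral_net_charge)
  also have "a * T + b * \<gamma> \<le> max 0 (\<eta>p * (max (\<gamma> * xb) (T * xb) + \<gamma> * xr))"
  proof (cases "0 \<le> xb")
    case True
    then have "max (\<gamma> * xb) (T * xb) = T * xb"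
      using assms by (simp add: mult_right_mono max_absorb2)
    with True assms show ?thesis
      by (simp add: a_def b_def pos_part_def algebra_simps)
  next
    case False
    then have "max (\<gamma> * xb) (T * xb) = \<gamma> * xb"
      using assms by (simp add: mult_right_mono_neg max_absorb1)
    with False assms show ?thesis
      by (auto simp: a_def b_def pos_part_def algebra_simps max_def)
  qed
  finally show ?thesis
    by simp
qed

lemma exists_soc_ge_worst_case:
  assumes "0 \<le> \<eta>p" "0 \<le> xr" "0 \<le> \<gamma>" "\<gamma> \<le> T"
  shows "\<exists>\<delta>\<in>uset T \<gamma>. \<exists>t\<in>{0..T}. y0 + \<eta>p * (max (\<gamma> * xb) (T * xb) + \<gamma> * xr) \<le> soc \<eta>p \<eta>m xb xr \<delta> y0 t"
proof -
  define \<delta> :: "real \<Rightarrow> real" where "\<delta> s = 1 * indicator {0..\<gamma>} s" for s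
  have \<delta>: "\<delta> \<in> uset T \<gamma>"
    unfolding \<delta>_def using assms by (intro pulse_in_uset) auto
  define G where "G d = net_charge \<eta>p \<eta>m (xb + d * xr)" for d
  have soc_\<delta>: "soc \<eta>p \<eta>m xb xr \<delta> y0 t = y0 + (G 0 * t + (G 1 - G 0) * \<gamma>)" if "\<gamma> \<le> t" for t
    using that assms integral_comp_pulse[of \<gamma> t G 1]
    by (simp add: soc_eq_integral_net_charge \<delta>_def G_def)
  have G1: "G 1 = \<eta>p * (xb + xr)" if "0 \<le> xb + xr"
    using that by (simp add: G_def net_charge_def pos_part_def neg_part_def)
  consider "0 \<le> xb" | "xb < 0" "0 \<le> xb + xr" | "xb + xr < 0"
    by linarith
  then show ?thesis
  proof cases
    case 1
    then have "max (\<gamma> * xb) (T * xb) = T * xb"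
      using assms by (simp add: mult_right_mono max_absorb2)
    then have "y0 + \<eta>p * (max (\<gamma> * xb) (T * xb) + \<gamma> * xr) = soc \<eta>p \<eta>m xb xr \<delta> y0 T"
      using 1 assms soc_\<delta>[of T] G1
      by (simp add: G_def net_charge_def pos_part_def neg_part_def algebra_simps)
    then show ?thesis
      using \<delta> assms by (intro bexI[OF _ \<delta>] bexI[of _ T]) auto
  next
    case 2
    then have "max (\<gamma> * xb) (T * xb) = \<gamma> * xb"
      using assms by (simp add: mult_right_mono_neg max_absorb1)
    then have "y0 + \<eta>p * (max (\<gamma> * xb) (T * xb) + \<gamma> * xr) = soc \<eta>p \<eta>m xb xr \<delta> y0 \<gamma>"
      using 2 assms soc_\<delta>[of \<gamma>] G1 by (simp add: algebra_simps)
    then show ?thesis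
      using \<delta> assms by (intro bexI[OF _ \<delta>] bexI[of _ \<gamma>]) auto
  next
    case 3
    then have "max (\<gamma> * xb) (T * xb) = \<gamma> * xb"
      using assms by (simp add: mult_right_mono_neg max_absorb1)
    with 3 assms have "y0 + \<eta>p * (max (\<gamma> * xb) (T * xb) + \<gamma> * xr) \<le> soc \<eta>p \<eta>m xb xr \<delta> y0 0"
      by (simp add: soc_at_0 mult_nonneg_nonpos flip: distrib_left)
    then show ?thesis
      using \<delta> assms by (intro bexI[OF _ \<delta>] bexI[of _ 0]) auto
  qed
qed

lemma soc_le_iff:
  assumes "0 \<le> \<eta>p" "0 \<le> \<eta>m" "0 \<le> xr" "0 \<le> \<gamma>" "\<gamma> \<le> T" "y0 \<le> ybar"
  shows "(\<forall>\<delta>\<in>uset T \<gamma>. \<forall>t\<in>{0..T}. soc \<eta>p \<eta>m xb xr \<delta> y0 t \<le> ybar)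
    \<longleftrightarrow> y0 + \<eta>p * (max (\<gamma> * xb) (T * xb) + \<gamma> * xr) \<le> ybar"
proof
  assume bound: "\<forall>\<delta>\<in>uset T \<gamma>. \<forall>t\<in>{0..T}. soc \<eta>p \<eta>m xb xr \<delta> y0 t \<le> ybar"
  obtain \<delta> t where "\<delta> \<in> uset T \<gamma>" "t \<in> {0..T}"
    and "y0 + \<eta>p * (max (\<gamma> * xb) (T * xb) + \<gamma> * xr) \<le> soc \<eta>p \<eta>m xb xr \<delta> y0 t"
    using exists_soc_ge_worst_case[OF assms(1,3-5)] by blast
  with bound show "y0 + \<eta>p * (max (\<gamma> * xb) (T * xb) + \<gamma> * xr) \<le> ybar"
    by fastforce
next
  assume "y0 + \<eta>p * (max (\<gamma> * xb) (T * xb) + \<gamma> * xr) \<le> ybar"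
  with assms(6) have "y0 + max 0 (\<eta>p * (max (\<gamma> * xb) (T * xb) + \<gamma> * xr)) \<le> ybar"
    by simp
  with soc_le_worst_case[OF assms(1-5)]
  show "\<forall>\<delta>\<in>uset T \<gamma>. \<forall>t\<in>{0..T}. soc \<eta>p \<eta>m xb xr \<delta> y0 t \<le> ybar"
    by (meson order_trans)
qed

lemma soc_ge_iff:
  assumes "0 \<le> \<eta>p" "0 \<le> \<eta>m" "0 \<le> xr" "0 \<le> \<gamma>" "\<gamma> \<le> T" "0 \<le> y0"
  shows "(\<forall>\<delta>\<in>uset T \<gamma>. \<forall>t\<in>{0..T}. 0 \<le> soc \<eta>p \<eta>m xb xr \<delta> y0 t)
    \<longleftrightarrow> 0 \<le> y0 - 1 / \<eta>m * (\<gamma> * xr - min (\<gamma> * xb) (T * xb))"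
proof -
  let ?soc' = "soc (1 / \<eta>m) (1 / \<eta>p) (- xb) xr"
  have flip: "0 \<le> soc \<eta>p \<eta>m xb xr \<delta> y0 t \<longleftrightarrow> ?soc' (\<lambda>s. - \<delta> s) 0 t \<le> y0" for \<delta> t
    using soc_uminus[of \<eta>p \<eta>m xb xr \<delta> y0 t] by linarith
  have "(\<forall>\<delta>\<in>uset T \<gamma>. \<forall>t\<in>{0..T}. 0 \<le> soc \<eta>p \<eta>m xb xr \<delta> y0 t)
      \<longleftrightarrow> (\<forall>\<delta>\<in>uset T \<gamma>. \<forall>t\<in>{0..T}. ?soc' \<delta> 0 t \<le> y0)"
    unfolding flip by (rule uset_ball_uminus[where P = "\<lambda>\<delta>. \<forall>t\<in>{0..T}. ?soc' \<delta> 0 t \<le> y0"])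
  also have "\<dots> \<longleftrightarrow> 0 + 1 / \<eta>m * (max (\<gamma> * - xb) (T * - xb) + \<gamma> * xr) \<le> y0"
    using assms by (intro soc_le_iff) auto
  also have "\<dots> \<longleftrightarrow> 0 \<le> y0 - 1 / \<eta>m * (\<gamma> * xr - min (\<gamma> * xb) (T * xb))"
    by (simp add: max_def min_def)
  finally show ?thesis .
qed

theorem proposition1:
  fixes T \<gamma> \<eta>p \<eta>m yp ym ybar y0 xb xr :: real
  assumes "T > 0" and "0 < \<gamma>" and "\<gamma> \<le> T"
    and "0 < \<eta>p" and "\<eta>p \<le> 1" and "0 < \<eta>m" and "\<eta>m \<le> 1"
    and "yp \<ge> 0" and "ym \<ge> 0" and "ybar > 0"
    and "0 \<le> y0" and "y0 \<le> ybar"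
    and "xr \<ge> 0"
  shows "((\<forall>\<delta>\<in>uset T \<gamma>. \<forall>t\<in>{0..T}. pos_part (xb + \<delta> t * xr) \<le> yp)
            \<longleftrightarrow> xb + xr \<le> yp)
       \<and> ((\<forall>\<delta>\<in>uset T \<gamma>. \<forall>t\<in>{0..T}. neg_part (xb + \<delta> t * xr) \<le> ym)
            \<longleftrightarrow> xr - xb \<le> ym)
       \<and> ((\<forall>\<delta>\<in>uset T \<gamma>. \<forall>t\<in>{0..T}. soc \<eta>p \<eta>m xb xr \<delta> y0 t \<le> ybar)
            \<longleftrightarrow> y0 + \<eta>p * (max (\<gamma> * xb) (T * xb) + \<gamma> * xr) \<le> ybar)
       \<and> ((\<forall>\<delta>\<in>uset T \<gamma>. \<forall>t\<in>{0..T}. soc \<eta>p \<eta>m xb xr \<delta> y0 t \<ge> 0)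
            \<longleftrightarrow> y0 - (1 / \<eta>m) * (\<gamma> * xr - min (\<gamma> * xb) (T * xb)) \<ge> 0)"
proof -
  have \<gamma>: "0 \<le> \<gamma>" "\<gamma> \<le> T"
    using assms by auto
  have "(\<forall>\<delta>\<in>uset T \<gamma>. \<forall>t\<in>{0..T}. pos_part (xb + \<delta> t * xr) \<le> yp) \<longleftrightarrow> xb + xr \<le> yp"
    using uset_pointwise_iff[OF \<gamma>, where P = "\<lambda>d. pos_part (xb + d * xr) \<le> yp"]
      pos_part_affine_le_iff[of xr yp xb] assms by simp
  moreover have "(\<forall>\<delta>\<in>uset T \<gamma>. \<forall>t\<in>{0..T}. neg_part (xb + \<delta> t * xr) \<le> ym) \<longleftrightarrow> xr - xb \<le> ym"
    using uset_pointwise_iff[OF \<gamma>, where P = "\<lambda>d. neg_part (xb + d * xr) \<le> ym"]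
      neg_part_affine_le_iff[of xr ym xb] assms by simp
  moreover have "(\<forall>\<delta>\<in>uset T \<gamma>. \<forall>t\<in>{0..T}. soc \<eta>p \<eta>m xb xr \<delta> y0 t \<le> ybar)
      \<longleftrightarrow> y0 + \<eta>p * (max (\<gamma> * xb) (T * xb) + \<gamma> * xr) \<le> ybar"
    using assms by (intro soc_le_iff) auto
  moreover have "(\<forall>\<delta>\<in>uset T \<gamma>. \<forall>t\<in>{0..T}. 0 \<le> soc \<eta>p \<eta>m xb xr \<delta> y0 t)
      \<longleftrightarrow> 0 \<le> y0 - 1 / \<eta>m * (\<gamma> * xr - min (\<gamma> * xb) (T * xb))"
    using assms by (intro soc_ge_iff) auto
  ultimately show ?thesis
    by simp
qed

end
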